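(* Let $\mathbb{V}_0$ be a finite set of nodes with an optimal TSP route $\sigma_0$, and let $Z_1,\dots,Z_k$ be additional distinct nodes not in $\mathbb{V}_0$, with $\omega$ a symmetric weight function on pairs of distinct nodes of $\mathbb{V}_0\cup\{Z_1,\dots,Z_k\}$. For $i=1,\dots,k$ let $\mathbb{V}_i=\mathbb{V}_{i-1}\cup\{Z_i\}$, let $P_i,Q_i$ be neighbours on $\sigma_{i-1}$, and let $\sigma_i$ be obtained from $\sigma_{i-1}$ by inserting $Z_i$ between $P_i$ and $Q_i$. Suppose that for every $i$ there is no unordered pair $\{A,B\}$ of distinct nodes of $\mathbb{V}_{i-1}$ (which includes the previously added nodes $Z_1,\dots,Z_{i-1}$) with $\{A,B\}\neq\{P_i,Q_i\}$ such that $\omega(A,Z_i)+\omega(B,Z_i)-\omega(A,B)\le\omega(P_i,Z_i)+\omega(Q_i,Z_i)-\omega(P_i,Q_i)$. Then $\sigma_k$ is an optimal TSP route over $\mathbb{V}_k=\mathbb{V}_0\cup\{Z_1,\dots,Z_k\}$.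
   Context: For a set of nodes with weights $\omega$, a route is a cyclic ordering (permutation) $\sigma=(\sigma_1,\dots,\sigma_n)$ of all nodes, with cost $c(\sigma)=\omega(\sigma_n,\sigma_1)+\sum_{i=1}^{n-1}\omega(\sigma_i,\sigma_{i+1})$; a route is optimal if it minimizes this cost. Two nodes are neighbours on $\sigma$ if they are consecutive in $\sigma$ or are its first and last element. *)

theory Defs
  imports Complex_Main
begin

text \<open>A route over a node set V is a list enumerating V without repetition
  (read cyclically).\<close>
definition is_route :: "'a set \<Rightarrow> 'a list \<Rightarrow> bool" where
  "is_route V xs \<longleftrightarrow> distinct xs \<and> set xs = V"

definition route_cost :: "('a \<Rightarrow> 'a \<Rightarrow> real) \<Rightarrow> 'a list \<Rightarrow> real" where
  "route_cost w xs = (if xs = [] then 0 else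
     w (last xs) (hd xs) + (\<Sum>i<length xs - 1. w (xs ! i) (xs ! Suc i)))"

definition optimal_route :: "('a \<Rightarrow> 'a \<Rightarrow> real) \<Rightarrow> 'a set \<Rightarrow> 'a list \<Rightarrow> bool" where
  "optimal_route w V xs \<longleftrightarrow> is_route V xs \<and>
     (\<forall>ys. is_route V ys \<longrightarrow> route_cost w xs \<le> route_cost w ys)"

definition neighbours :: "'a list \<Rightarrow> 'a \<Rightarrow> 'a \<Rightarrow> bool" where
  "neighbours xs A B \<longleftrightarrow>
     (\<exists>i. Suc i < length xs \<and> {xs ! i, xs ! Suc i} = {A, B}) \<or>
     (xs \<noteq> [] \<and> {hd xs, last xs} = {A, B})"

definition inserted_between :: "'a list \<Rightarrow> 'a \<Rightarrow> 'a \<Rightarrow> 'a \<Rightarrow> 'a list \<Rightarrow> bool" where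
  "inserted_between xs P Q z ys \<longleftrightarrow>
     (\<exists>us vs. (xs = us @ P # Q # vs \<and> ys = us @ P # z # Q # vs) \<or>
              (xs = us @ Q # P # vs \<and> ys = us @ Q # z # P # vs)) \<or>
     (xs \<noteq> [] \<and> {hd xs, last xs} = {P, Q} \<and> ys = xs @ [z])"

end

theory Submission
  imports Defs
begin

text \<open>Every route over \<open>insert z U\<close> is, up to rotation, a route \<open>r\<close> over \<open>U\<close> followed by \<open>z\<close>,
  and its cost is that of \<open>r\<close> plus the insertion cost \<open>w a z + w b z - w a b\<close> of \<open>z\<close> between
  the end points \<open>a, b\<close> of \<open>r\<close>. The cost of \<open>r\<close> is at least that of an optimal route over \<open>U\<close>,
  and the hypothesis says that no pair of nodes of \<open>U\<close> is cheaper to insert \<open>z\<close> between than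
  the neighbours \<open>P, Q\<close> actually used, so inserting \<open>z\<close> between \<open>P\<close> and \<open>Q\<close> into an
  optimal route gives an optimal route.\<close>

fun path_cost :: "('a \<Rightarrow> 'a \<Rightarrow> real) \<Rightarrow> 'a list \<Rightarrow> real" where
  "path_cost w [] = 0"
| "path_cost w [x] = 0"
| "path_cost w (x # y # xs) = w x y + path_cost w (y # xs)"

lemma sum_consecutive_eq_path_cost:
  "(\<Sum>i<length xs - 1. w (xs ! i) (xs ! Suc i)) = path_cost w xs"
proof (induction w xs rule: path_cost.induct)
  case (3 w x y xs)
  have "(\<Sum>i<length (x # y # xs) - 1. w ((x # y # xs) ! i) ((x # y # xs) ! Suc i))
      = w x y + (\<Sum>i<length (y # xs) - 1. w ((y # xs) ! i) ((y # xs) ! Suc i))"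
    by (simp add: sum.lessThan_Suc_shift del: sum.lessThan_Suc)
  then show ?case using 3 by simp
qed auto

lemma route_cost_eq_path_cost:
  "xs \<noteq> [] \<Longrightarrow> route_cost w xs = w (last xs) (hd xs) + path_cost w xs"
  using sum_consecutive_eq_path_cost[of w xs] by (simp add: route_cost_def)

lemma path_cost_append:
  "xs \<noteq> [] \<Longrightarrow> ys \<noteq> [] \<Longrightarrow> path_cost w (xs @ ys) = path_cost w xs + w (last xs) (hd ys) + path_cost w ys"
proof (induction w xs rule: path_cost.induct)
  case (2 w x)
  then show ?case by (cases ys) auto
qed auto

lemma route_cost_append_commute: "route_cost w (xs @ ys) = route_cost w (ys @ xs)"
  by (cases "xs = [] \<or> ys = []") (auto simp: route_cost_eq_path_cost path_cost_append)

lemma route_cost_rotate1: "route_cost w (rotate1 xs) = route_cost w xs"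
  by (cases xs) (simp_all add: route_cost_append_commute[of w _ "[_]"])

lemma route_cost_rotate: "route_cost w (rotate n xs) = route_cost w xs"
  by (induction n) (simp_all add: route_cost_rotate1)

definition insertion_cost :: "('a \<Rightarrow> 'a \<Rightarrow> real) \<Rightarrow> 'a \<Rightarrow> 'a \<Rightarrow> 'a \<Rightarrow> real" where
  "insertion_cost w z a b = w a z + w b z - w a b"

lemma route_cost_snoc:
  assumes "r \<noteq> []" and "w z (hd r) = w (hd r) z"
  shows "route_cost w (r @ [z]) = route_cost w r + insertion_cost w z (last r) (hd r)"
  using assms by (simp add: route_cost_eq_path_cost path_cost_append insertion_cost_def)

lemma in_set_rotate_snoc:
  assumes "z \<in> set t"
  obtains r n where "t = rotate n (r @ [z])"
proof -
  obtain us vs where "t = us @ z # vs" using assms by (meson split_list)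
  then have "t = rotate (length vs) ((vs @ us) @ [z])" by (simp only: append.assoc rotate_append) simp
  then show thesis by (rule that)
qed

lemma inserted_between_rotation:
  assumes "inserted_between s p q z s'"
  obtains \<rho> n m where "s = rotate n \<rho>" and "s' = rotate m (\<rho> @ [z])"
    and "\<rho> \<noteq> []" and "{last \<rho>, hd \<rho>} = {p, q}"
proof -
  consider (pq) us vs where "s = us @ p # q # vs" "s' = us @ p # z # q # vs"
    | (qp) us vs where "s = us @ q # p # vs" "s' = us @ q # z # p # vs"
    | (ends) "s \<noteq> []" "{hd s, last s} = {p, q}" "s' = s @ [z]"
    using assms unfolding inserted_between_def by blast
  then show thesis
  proof cases
    case pq
    let ?\<rho> = "(q # vs) @ us @ [p]"
    have "s = rotate (length (q # vs)) ?\<rho>" "s' = rotate (length (q # vs)) (?\<rho> @ [z])"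
      by (simp_all only: append.assoc rotate_append) (simp_all add: pq)
    moreover have "?\<rho> \<noteq> []" "{last ?\<rho>, hd ?\<rho>} = {p, q}" by auto
    ultimately show thesis by (rule that)
  next
    case qp
    let ?\<rho> = "(p # vs) @ us @ [q]"
    have "s = rotate (length (p # vs)) ?\<rho>" "s' = rotate (length (p # vs)) (?\<rho> @ [z])"
      by (simp_all only: append.assoc rotate_append) (simp_all add: qp)
    moreover have "?\<rho> \<noteq> []" "{last ?\<rho>, hd ?\<rho>} = {p, q}" by auto
    ultimately show thesis by (rule that)
  next
    case ends
    then show thesis by (intro that[where \<rho>=s and n=0 and m=0]) (auto simp: insert_commute)
  qed
qed

lemma insertion_cost_doubleton:
  "{a, b} = {p, q} \<Longrightarrow> w p q = w q p \<Longrightarrow> insertion_cost w z a b = insertion_cost w z p q"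
  by (auto simp: doubleton_eq_iff insertion_cost_def)

lemma optimal_route_insert_cheapest:
  assumes opt: "optimal_route w U s"
    and z_new: "z \<notin> U"
    and sym: "\<And>x y. x \<in> insert z U \<Longrightarrow> y \<in> insert z U \<Longrightarrow> w x y = w y x"
    and ins: "inserted_between s p q z s'"
    and cheapest: "\<And>a b. a \<in> U \<Longrightarrow> b \<in> U \<Longrightarrow> a \<noteq> b \<Longrightarrow> {a, b} \<noteq> {p, q} \<Longrightarrow>
                   insertion_cost w z p q \<le> insertion_cost w z a b"
  shows "optimal_route w (insert z U) s'"
proof -
  have s_route: "is_route U s" and s_min: "\<And>t. is_route U t \<Longrightarrow> route_cost w s \<le> route_cost w t"
    using opt by (auto simp: optimal_route_def)
  have cost_snoc: "route_cost w (r @ [z]) = route_cost w r + insertion_cost w z (last r) (hd r)"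
    if "is_route U r" "r \<noteq> []" for r
  proof -
    have "hd r \<in> U" using that by (auto simp: is_route_def)
    then have "w z (hd r) = w (hd r) z" using sym by blast
    with \<open>r \<noteq> []\<close> show ?thesis by (rule route_cost_snoc)
  qed
  obtain \<rho> n m where \<rho>: "s = rotate n \<rho>" "s' = rotate m (\<rho> @ [z])" "\<rho> \<noteq> []"
    and ends_\<rho>: "{last \<rho>, hd \<rho>} = {p, q}"
    using ins by (rule inserted_between_rotation)
  have \<rho>_route: "is_route U \<rho>" using s_route \<rho>(1) by (simp add: is_route_def)
  have "p \<in> {last \<rho>, hd \<rho>}" "q \<in> {last \<rho>, hd \<rho>}" using ends_\<rho> by simp_all
  then have pq: "p \<in> U" "q \<in> U" using \<rho>(3) \<rho>_route by (auto simp: is_route_def)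
  then have w_pq: "w p q = w q p" using sym by blast
  have s'_cost: "route_cost w s' = route_cost w s + insertion_cost w z p q"
    using \<rho> cost_snoc[OF \<rho>_route] insertion_cost_doubleton[OF ends_\<rho> w_pq]
    by (simp add: route_cost_rotate)
  have s'_route: "is_route (insert z U) s'"
    using \<rho> \<rho>_route z_new by (auto simp: is_route_def)
  have "route_cost w s' \<le> route_cost w t" if t_route: "is_route (insert z U) t" for t
  proof -
    have "z \<in> set t" using t_route by (simp add: is_route_def)
    then obtain r j where t: "t = rotate j (r @ [z])" by (rule in_set_rotate_snoc)
    then have r_route: "is_route U r" using t_route z_new by (auto simp: is_route_def)
    then have "r \<noteq> []" using \<rho>_route \<rho>(3) by (auto simp: is_route_def)
    then have ends_r: "last r \<in> U" "hd r \<in> U" using r_route by (auto simp: is_route_def)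
    have "insertion_cost w z p q \<le> insertion_cost w z (last r) (hd r)"
    proof (cases "last r = hd r")
      case True
      with \<open>r \<noteq> []\<close> r_route have "U = {hd r}"
        by (cases r) (auto simp: is_route_def split: if_splits)
      with pq True show ?thesis by simp
    next
      case False
      show ?thesis
      proof (cases "{last r, hd r} = {p, q}")
        case True
        show ?thesis using insertion_cost_doubleton[OF True w_pq] by simp
      next
        case False
        with ends_r \<open>last r \<noteq> hd r\<close> show ?thesis by (rule cheapest)
      qed
    qed
    moreover have "route_cost w s \<le> route_cost w r" using s_min r_route .
    ultimately show ?thesis
      using s'_cost t cost_snoc[OF r_route \<open>r \<noteq> []\<close>] by (simp add: route_cost_rotate)
  qed
  with s'_route show ?thesis by (simp add: optimal_route_def)
qed

theorem corollary1:
  fixes V0 :: "'a set" and k :: nat and Z :: "nat \<Rightarrow> 'a"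
    and w :: "'a \<Rightarrow> 'a \<Rightarrow> real" and \<sigma> :: "nat \<Rightarrow> 'a list"
    and P Q :: "nat \<Rightarrow> 'a" and V :: "nat \<Rightarrow> 'a set"
  assumes fin: "finite V0"
    and opt0: "optimal_route w V0 (\<sigma> 0)"
    and Z_new: "\<forall>i\<in>{1..k}. Z i \<notin> V0"
    and Z_dist: "inj_on Z {1..k}"
    and w_sym: "\<forall>x\<in>V0 \<union> Z ` {1..k}. \<forall>y\<in>V0 \<union> Z ` {1..k}. w x y = w y x"
    and V_def: "\<forall>i\<le>k. V i = V0 \<union> Z ` {1..i}"
    and nb: "\<forall>i\<in>{1..k}. neighbours (\<sigma> (i - 1)) (P i) (Q i)"
    and ins: "\<forall>i\<in>{1..k}. inserted_between (\<sigma> (i - 1)) (P i) (Q i) (Z i) (\<sigma> i)"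
    and unique: "\<forall>i\<in>{1..k}. \<not> (\<exists>A\<in>V (i - 1). \<exists>B\<in>V (i - 1).
                   A \<noteq> B \<and> {A, B} \<noteq> {P i, Q i} \<and>
                   w A (Z i) + w B (Z i) - w A B \<le> w (P i) (Z i) + w (Q i) (Z i) - w (P i) (Q i))"
  shows "optimal_route w (V k) (\<sigma> k)"
proof -
  have "optimal_route w (V i) (\<sigma> i)" if "i \<le> k" for i
    using that
  proof (induction i)
    case 0
    then show ?case using opt0 V_def by simp
  next
    case (Suc i)
    then have i: "Suc i \<in> {1..k}" and IH: "optimal_route w (V i) (\<sigma> i)" by simp_all
    have V_Suc: "V (Suc i) = insert (Z (Suc i)) (V i)"
      using V_def Suc.prems by (simp add: atLeastAtMostSuc_conv)
    have "Z (Suc i) \<notin> Z ` {1..i}"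
      using inj_on_image_mem_iff[OF Z_dist i, of "{1..i}"] Suc.prems by auto
    then have Z_new_i: "Z (Suc i) \<notin> V i" using V_def Suc.prems Z_new i by auto
    have "V (Suc i) \<subseteq> V0 \<union> Z ` {1..k}" using V_def Suc.prems by auto
    then have sym: "w x y = w y x" if "x \<in> insert (Z (Suc i)) (V i)" "y \<in> insert (Z (Suc i)) (V i)" for x y
      using w_sym V_Suc that by blast
    have cheapest: "insertion_cost w (Z (Suc i)) (P (Suc i)) (Q (Suc i)) \<le> insertion_cost w (Z (Suc i)) a b"
      if "a \<in> V i" "b \<in> V i" "a \<noteq> b" "{a, b} \<noteq> {P (Suc i), Q (Suc i)}" for a b
      using unique i that by (force simp: insertion_cost_def)
    have ins_i: "inserted_between (\<sigma> i) (P (Suc i)) (Q (Suc i)) (Z (Suc i)) (\<sigma> (Suc i))"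
      using ins i by fastforce
    show ?case unfolding V_Suc
      using IH Z_new_i sym ins_i cheapest by (rule optimal_route_insert_cheapest)
  qed
  then show ?thesis by simp
qed

end
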